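(* If $G$ is a simple graph whose vertices are among the variables of $S=\mathbb{K}[x_1,\dots,x_n]$, $\mathbb{K}$ a field, then $\operatorname{sreg}(S/I(G))\le\operatorname{box}(\overline{G})$.
   Context: $\overline{G}$ is the complement graph of $G$. The boxicity $\operatorname{box}(H)$ of a graph $H$ is the minimum $k$ such that $H$ is the intersection graph of a family of axis-parallel boxes in $\mathbb{R}^k$; equivalently, it is the smallest number of co-interval spanning subgraphs of $\overline{H}$ whose edge sets cover $E(\overline{H})$ (an interval graph is an intersection graph of intervals on the real line; a co-interval graph is the complement of an interval graph). $I(G)=(xy : \{x,y\}\in E(G))$ is the edge ideal. Stanley regularity: for a squarefree monomial ideal $I\subset S$, a squarefree Stanley decomposition of $S/I$ is a decomposition $S/I=\bigoplus_{i=1}^r u_i\mathbb{K}[Z_i]$ as $\mathbb{K}$-vector spaces, where $Z_i\subseteq\{x_1,\dots,x_n\}$, $u_i$ are (images of) squarefree monomials with $\operatorname{supp}(u_i)\subseteq Z_i$, and each $u_i\mathbb{K}[Z_i]$ is free over $\mathbb{K}[Z_i]$. Its Stanley regularity is $\max_i\deg(u_i)$, and $\operatorname{sreg}(S/I)$ is the minimum over all such decompositions. *)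

theory Defs
  imports Complex_Main
begin

definition simple_graph :: "'a set \<Rightarrow> 'a set set \<Rightarrow> bool" where
  "simple_graph V E \<longleftrightarrow> finite V \<and>
     (\<forall>e\<in>E. \<exists>u v. e = {u, v} \<and> u \<noteq> v \<and> u \<in> V \<and> v \<in> V)"

definition compl_edges :: "'a set \<Rightarrow> 'a set set \<Rightarrow> 'a set set" where
  "compl_edges V E = {{u, v} | u v. u \<in> V \<and> v \<in> V \<and> u \<noteq> v \<and> {u, v} \<notin> E}"

text \<open>The axis-parallel closed box in R^k with lower corner a and upper corner b
  (points of R^k are represented by their first k coordinates).\<close>
definition box_set :: "nat \<Rightarrow> (nat \<Rightarrow> real) \<Rightarrow> (nat \<Rightarrow> real) \<Rightarrow> (nat \<Rightarrow> real) set" where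
  "box_set k a b = {x. \<forall>j<k. a j \<le> x j \<and> x j \<le> b j}"

definition box_representation ::
    "'a set \<Rightarrow> 'a set set \<Rightarrow> nat \<Rightarrow> ('a \<Rightarrow> nat \<Rightarrow> real) \<Rightarrow> ('a \<Rightarrow> nat \<Rightarrow> real) \<Rightarrow> bool" where
  "box_representation V E k a b \<longleftrightarrow>
     (\<forall>v\<in>V. \<forall>j<k. a v j \<le> b v j) \<and>
     (\<forall>u\<in>V. \<forall>v\<in>V. u \<noteq> v \<longrightarrow>
        ({u, v} \<in> E \<longleftrightarrow> box_set k (a u) (b u) \<inter> box_set k (a v) (b v) \<noteq> {}))"

definition boxicity :: "'a set \<Rightarrow> 'a set set \<Rightarrow> nat" where
  "boxicity V E = (LEAST k. \<exists>a b. box_representation V E k a b)"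

text \<open>Monomials of S = K[X] are exponent vectors supported in X.\<close>
definition monomials :: "'a set \<Rightarrow> ('a \<Rightarrow> nat) set" where
  "monomials X = {m. \<forall>x. x \<notin> X \<longrightarrow> m x = 0}"

definition in_edge_ideal :: "'a set set \<Rightarrow> ('a \<Rightarrow> nat) \<Rightarrow> bool" where
  "in_edge_ideal E m \<longleftrightarrow> (\<exists>e\<in>E. \<forall>x\<in>e. 0 < m x)"

text \<open>Monomials spanning u K[Z], where u = product of the variables in U (squarefree), U \<subseteq> Z.\<close>
definition stanley_space :: "'a set \<times> 'a set \<Rightarrow> ('a \<Rightarrow> nat) set" where
  "stanley_space UZ = {m. (\<forall>x. x \<notin> snd UZ \<longrightarrow> m x = 0) \<and> (\<forall>x\<in>fst UZ. 1 \<le> m x)}"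

text \<open>Squarefree Stanley decomposition of S/I(G): list of pieces (U_i, Z_i) with
  supp(u_i) = U_i \<subseteq> Z_i \<subseteq> X; u_i K[Z_i] free over K[Z_i] (no monomial of it lies in I);
  and the direct sum equals S/I (every standard monomial lies in exactly one piece).\<close>
definition sq_stanley_decomp :: "'a set \<Rightarrow> 'a set set \<Rightarrow> ('a set \<times> 'a set) list \<Rightarrow> bool" where
  "sq_stanley_decomp X E D \<longleftrightarrow>
     (\<forall>UZ\<in>set D. fst UZ \<subseteq> snd UZ \<and> snd UZ \<subseteq> X \<and>
                  (\<forall>m\<in>stanley_space UZ. \<not> in_edge_ideal E m)) \<and>
     (\<forall>m\<in>monomials X. \<not> in_edge_ideal E m \<longrightarrow>
        (\<exists>!i. i < length D \<and> m \<in> stanley_space (D ! i)))"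

definition stanley_reg_of :: "('a set \<times> 'a set) list \<Rightarrow> nat" where
  "stanley_reg_of D = Max (insert 0 ((\<lambda>UZ. card (fst UZ)) ` set D))"

definition sreg :: "'a set \<Rightarrow> 'a set set \<Rightarrow> nat" where
  "sreg X E = Inf {stanley_reg_of D | D. sq_stanley_decomp X E D}"

end

theory Submission
  imports Defs "HOL-Library.Product_Lexorder"
begin

text \<open>The standard monomials of \<open>S/I(G)\<close> are those whose support meets \<open>V\<close> in an
  independent set of \<open>G\<close>, so a partition of the independence complex of \<open>G\<close> into
  intervals \<open>[U, Z]\<close> gives a squarefree Stanley decomposition with pieces
  \<open>x\<^sub>U K[Z \<union> (X - V)]\<close>, of Stanley regularity \<open>max |U|\<close>.
  Independent sets of \<open>G\<close> are cliques of \<open>\<overline>G\<close>, i.e. families of pairwise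
  intersecting boxes of a \<open>k\<close>-dimensional box representation of \<open>\<overline>G\<close>. Sending such a
  family \<open>\<sigma>\<close> to its set of leaders (the members with the largest lower endpoint in some
  coordinate, at most \<open>k\<close> of them) and letting \<open>Z\<close> consist of all vertices whose box
  reaches every leader's lower endpoint from below yields such an interval partition,
  by the Helly property of boxes.\<close>

lemma box_set_inter_nonempty_iff:
  assumes "\<forall>j<k. a j \<le> b j" "\<forall>j<k. a' j \<le> b' j"
  shows "box_set k a b \<inter> box_set k a' b' \<noteq> {} \<longleftrightarrow> (\<forall>j<k. a j \<le> b' j \<and> a' j \<le> b j)"
proof
  assume "box_set k a b \<inter> box_set k a' b' \<noteq> {}"
  then obtain x where "x \<in> box_set k a b" "x \<in> box_set k a' b'" by blast
  then show "\<forall>j<k. a j \<le> b' j \<and> a' j \<le> b j" unfolding box_set_def by force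
next
  assume "\<forall>j<k. a j \<le> b' j \<and> a' j \<le> b j"
  then have "(\<lambda>j. max (a j) (a' j)) \<in> box_set k a b \<inter> box_set k a' b'"
    using assms unfolding box_set_def by auto
  then show "box_set k a b \<inter> box_set k a' b' \<noteq> {}" by blast
qed

lemma doubleton_in_compl_edges_iff:
  assumes "u \<in> V" "v \<in> V" "u \<noteq> v"
  shows "{u, v} \<in> compl_edges V E \<longleftrightarrow> {u, v} \<notin> E"
  using assms unfolding compl_edges_def by (auto simp: doubleton_eq_iff) (metis insert_commute)

text \<open>Vertex \<open>f i\<close> gets the box \<open>{0}\<close> in coordinate \<open>i\<close>, its neighbours \<open>[0, 1]\<close>, all
  other vertices \<open>{1}\<close>.\<close>
lemma box_representation_exists:
  assumes "finite V"
  shows "\<exists>k a b. box_representation V H k a b"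
proof -
  obtain f where f: "bij_betw f {0..<card V} V" using ex_bij_betw_nat_finite[OF assms] by blast
  define a where "a = (\<lambda>u i. if u = f i \<or> {u, f i} \<in> H then (0::real) else 1)"
  define b where "b = (\<lambda>u i. if u = f i then (0::real) else 1)"
  have le: "\<forall>v\<in>V. \<forall>j<card V. a v j \<le> b v j" unfolding a_def b_def by auto
  have "box_representation V H (card V) a b"
    unfolding box_representation_def
  proof (intro conjI le ballI impI)
    fix u v assume uv: "u \<in> V" "v \<in> V" "u \<noteq> v"
    have "box_set (card V) (a u) (b u) \<inter> box_set (card V) (a v) (b v) \<noteq> {} \<longleftrightarrow>
          (\<forall>j<card V. a u j \<le> b v j \<and> a v j \<le> b u j)"
      using le uv by (intro box_set_inter_nonempty_iff) auto
    also have "\<dots> \<longleftrightarrow> {u, v} \<in> H"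
    proof
      assume h: "\<forall>j<card V. a u j \<le> b v j \<and> a v j \<le> b u j"
      obtain i where i: "i < card V" "f i = u" using f uv unfolding bij_betw_def by force
      with h have "a v i \<le> 0" unfolding b_def by auto
      then show "{u, v} \<in> H" using uv i unfolding a_def by (auto simp: insert_commute split: if_splits)
    next
      assume "{u, v} \<in> H"
      then show "\<forall>j<card V. a u j \<le> b v j \<and> a v j \<le> b u j"
        using uv unfolding a_def b_def by (auto simp: insert_commute)
    qed
    finally show "{u, v} \<in> H \<longleftrightarrow> box_set (card V) (a u) (b u) \<inter> box_set (card V) (a v) (b v) \<noteq> {}"
      by simp
  qed
  then show ?thesis by blast
qed

lemma box_representation_boxicity:
  assumes "finite V"
  shows "\<exists>a b. box_representation V H (boxicity V H) a b"
  unfolding boxicity_def using box_representation_exists[OF assms] by (rule LeastI_ex)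

definition independent :: "'a set \<Rightarrow> 'a set set \<Rightarrow> 'a set \<Rightarrow> bool" where
  "independent V E \<sigma> \<longleftrightarrow> \<sigma> \<subseteq> V \<and> (\<forall>u\<in>\<sigma>. \<forall>v\<in>\<sigma>. u \<noteq> v \<longrightarrow> {u, v} \<notin> E)"

lemma independent_support_if_not_in_edge_ideal:
  assumes "\<not> in_edge_ideal E m"
  shows "independent V E {v\<in>V. 0 < m v}"
  using assms unfolding independent_def in_edge_ideal_def by auto

lemma not_in_edge_ideal_if_independent:
  assumes "simple_graph V E" "independent V E Z" "\<forall>x\<in>V. 0 < m x \<longrightarrow> x \<in> Z"
  shows "\<not> in_edge_ideal E m"
proof
  assume "in_edge_ideal E m"
  then obtain e where e: "e \<in> E" "\<forall>x\<in>e. 0 < m x" unfolding in_edge_ideal_def by auto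
  then obtain x y where "e = {x, y}" "x \<noteq> y" "x \<in> V" "y \<in> V"
    using assms(1) unfolding simple_graph_def by blast
  then show False using e assms(2,3) unfolding independent_def by auto
qed

lemma stanley_space_iff_support:
  assumes "m \<in> monomials X" "Z \<subseteq> V" "V \<subseteq> X" "U \<subseteq> V"
  shows "m \<in> stanley_space (U, Z \<union> (X - V)) \<longleftrightarrow> U \<subseteq> {v\<in>V. 0 < m v} \<and> {v\<in>V. 0 < m v} \<subseteq> Z"
  using assms unfolding stanley_space_def monomials_def
  by (auto simp: Suc_le_eq)

lemma sreg_le_stanley_reg_of:
  assumes "sq_stanley_decomp X E D"
  shows "sreg X E \<le> stanley_reg_of D"
  unfolding sreg_def using assms by (intro cInf_lower) auto

lemma sreg_le_if_interval_partition:
  assumes "V \<subseteq> X" "simple_graph V E" "finite P"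
    and intervals: "\<And>U Z. (U, Z) \<in> P \<Longrightarrow> U \<subseteq> Z \<and> independent V E Z \<and> card U \<le> s"
    and partition: "\<And>\<sigma>. independent V E \<sigma> \<Longrightarrow> \<exists>!UZ\<in>P. fst UZ \<subseteq> \<sigma> \<and> \<sigma> \<subseteq> snd UZ"
  shows "sreg X E \<le> s"
proof -
  define piece :: "'a set \<times> 'a set \<Rightarrow> 'a set \<times> 'a set"
    where "piece = (\<lambda>UZ. (fst UZ, snd UZ \<union> (X - V)))"
  obtain D where D: "set D = piece ` P" "distinct D"
    using finite_distinct_list[of "piece ` P"] \<open>finite P\<close> by auto
  have sub_V: "U \<subseteq> V" "Z \<subseteq> V" if "(U, Z) \<in> P" for U Z
    using intervals[OF that] unfolding independent_def by auto
  have in_piece_iff: "m \<in> stanley_space (piece UZ) \<longleftrightarrow> fst UZ \<subseteq> {v\<in>V. 0 < m v} \<and> {v\<in>V. 0 < m v} \<subseteq> snd UZ"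
    if "m \<in> monomials X" "UZ \<in> P" for m UZ
    using that sub_V[of "fst UZ" "snd UZ"] \<open>V \<subseteq> X\<close>
    by (simp add: piece_def stanley_space_iff_support)
  have pieces_valid: "fst UZ' \<subseteq> snd UZ' \<and> snd UZ' \<subseteq> X \<and> (\<forall>m\<in>stanley_space UZ'. \<not> in_edge_ideal E m)"
    if UZ'_in: "UZ' \<in> set D" for UZ'
  proof -
    obtain U Z where UZ: "(U, Z) \<in> P" "UZ' = (U, Z \<union> (X - V))"
      using UZ'_in D unfolding piece_def by auto
    have "\<not> in_edge_ideal E m" if "m \<in> stanley_space UZ'" for m
      using that UZ intervals[OF UZ(1)] \<open>simple_graph V E\<close>
      by (intro not_in_edge_ideal_if_independent[of V E Z]) (auto simp: stanley_space_def)
    then show ?thesis using UZ intervals[OF UZ(1)] sub_V[OF UZ(1)] \<open>V \<subseteq> X\<close> by auto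
  qed
  have unique_piece: "\<exists>!i. i < length D \<and> m \<in> stanley_space (D ! i)"
    if m: "m \<in> monomials X" "\<not> in_edge_ideal E m" for m
  proof -
    obtain UZ where UZ: "UZ \<in> P" "fst UZ \<subseteq> {v\<in>V. 0 < m v} \<and> {v\<in>V. 0 < m v} \<subseteq> snd UZ"
      and uniq: "\<And>UZ'. UZ' \<in> P \<Longrightarrow> fst UZ' \<subseteq> {v\<in>V. 0 < m v} \<and> {v\<in>V. 0 < m v} \<subseteq> snd UZ' \<Longrightarrow> UZ' = UZ"
      using partition[OF independent_support_if_not_in_edge_ideal[OF m(2)]] by blast
    have "piece UZ \<in> set D" using D UZ by auto
    then obtain i where i: "i < length D" "D ! i = piece UZ" by (auto simp: in_set_conv_nth)
    show ?thesis
    proof (rule ex1I[of _ i])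
      show "i < length D \<and> m \<in> stanley_space (D ! i)" using i UZ in_piece_iff[OF m(1)] by simp
    next
      fix i' assume i': "i' < length D \<and> m \<in> stanley_space (D ! i')"
      then obtain UZ' where UZ': "UZ' \<in> P" "D ! i' = piece UZ'" using D nth_mem by (metis imageE)
      with i' have "UZ' = UZ" using uniq in_piece_iff[OF m(1)] by simp
      then have "D ! i' = D ! i" using UZ' i by simp
      then show "i' = i" using D(2) i i' nth_eq_iff_index_eq by blast
    qed
  qed
  have "sq_stanley_decomp X E D"
    unfolding sq_stanley_decomp_def using pieces_valid unique_piece by blast
  moreover have "stanley_reg_of D \<le> s"
    unfolding stanley_reg_of_def using D intervals \<open>finite P\<close>
    by (intro Max.boundedI) (auto simp: piece_def)
  ultimately show ?thesis using sreg_le_stanley_reg_of order_trans by blast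
qed

locale box_representation_of_complement =
  fixes V :: "'a set" and E :: "'a set set" and k :: nat
    and a b :: "'a \<Rightarrow> nat \<Rightarrow> real" and r :: "'a \<Rightarrow> nat"
  assumes finite_V: "finite V"
    and rep: "box_representation V (compl_edges V E) k a b"
    and inj_r: "inj_on r V"
begin

text \<open>Ties between lower endpoints are broken by the injection \<open>r\<close>, so that every
  nonempty set of vertices has a unique leader in each coordinate.\<close>
definition key :: "nat \<Rightarrow> 'a \<Rightarrow> real \<times> nat" where
  "key j v = (a v j, r v)"

definition leader :: "nat \<Rightarrow> 'a set \<Rightarrow> 'a \<Rightarrow> bool" where
  "leader j T w \<longleftrightarrow> w \<in> T \<and> (\<forall>u\<in>T. key j u \<le> key j w)"

definition leaders :: "'a set \<Rightarrow> 'a set" where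
  "leaders \<sigma> = {w. \<exists>j<k. leader j \<sigma> w}"

definition zone :: "'a set \<Rightarrow> 'a set" where
  "zone T = {v\<in>V. \<forall>j<k. \<exists>w. leader j T w \<and> key j v \<le> key j w \<and> a w j \<le> b v j}"

lemma leader_unique:
  assumes "T \<subseteq> V" "leader j T w" "leader j T w'"
  shows "w = w'"
proof -
  have "key j w = key j w'" using assms(2,3) unfolding leader_def by (meson order_antisym)
  then show ?thesis
    using assms inj_r unfolding leader_def key_def by (auto dest: inj_onD)
qed

lemma leader_exists:
  assumes "T \<subseteq> V" "T \<noteq> {}"
  shows "\<exists>w. leader j T w"
proof -
  have "finite T" using assms(1) finite_V finite_subset by blast
  have "Max (key j ` T) \<in> key j ` T" using \<open>finite T\<close> assms(2) by (intro Max_in) auto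
  then obtain w where "w \<in> T" "key j w = Max (key j ` T)" by auto
  moreover have "key j u \<le> Max (key j ` T)" if "u \<in> T" for u
    using \<open>finite T\<close> that by (intro Max_ge) auto
  ultimately show ?thesis unfolding leader_def by auto
qed

lemma leaders_subset: "leaders \<sigma> \<subseteq> \<sigma>"
  unfolding leaders_def leader_def by auto

lemma card_leaders_le:
  assumes "\<sigma> \<subseteq> V"
  shows "card (leaders \<sigma>) \<le> k"
proof -
  have "leaders \<sigma> \<subseteq> (\<lambda>j. THE w. leader j \<sigma> w) ` {..<k}"
  proof
    fix w assume "w \<in> leaders \<sigma>"
    then obtain j where "j < k" "leader j \<sigma> w" unfolding leaders_def by auto
    then have "w = (THE w. leader j \<sigma> w)" using leader_unique[OF assms] by (metis the_equality)
    then show "w \<in> (\<lambda>j. THE w. leader j \<sigma> w) ` {..<k}" using \<open>j < k\<close> by auto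
  qed
  then have "card (leaders \<sigma>) \<le> card ((\<lambda>j. THE w. leader j \<sigma> w) ` {..<k})"
    by (intro card_mono) auto
  also have "\<dots> \<le> k" using card_image_le[of "{..<k}"] by auto
  finally show ?thesis .
qed

lemma lower_le_upper: "v \<in> V \<Longrightarrow> j < k \<Longrightarrow> a v j \<le> b v j"
  using rep unfolding box_representation_def by auto

lemma nonadjacent_iff_boxes_overlap:
  assumes "u \<in> V" "v \<in> V" "u \<noteq> v"
  shows "{u, v} \<notin> E \<longleftrightarrow> (\<forall>j<k. a u j \<le> b v j \<and> a v j \<le> b u j)"
proof -
  have "{u, v} \<notin> E \<longleftrightarrow> box_set k (a u) (b u) \<inter> box_set k (a v) (b v) \<noteq> {}"
    using rep assms doubleton_in_compl_edges_iff[OF assms, of E]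
    unfolding box_representation_def by auto
  also have "\<dots> \<longleftrightarrow> (\<forall>j<k. a u j \<le> b v j \<and> a v j \<le> b u j)"
    using assms lower_le_upper by (intro box_set_inter_nonempty_iff) auto
  finally show ?thesis .
qed

text \<open>Helly property of boxes: a vertex of \<open>zone T\<close> reaches, in every coordinate, the
  lower endpoint of the leader of \<open>T\<close>, which dominates its own lower endpoint.\<close>
lemma independent_zone:
  assumes "T \<subseteq> V"
  shows "independent V E (zone T)"
  unfolding independent_def
proof (intro conjI ballI impI)
  show "zone T \<subseteq> V" unfolding zone_def by auto
  fix x y assume xy: "x \<in> zone T" "y \<in> zone T" "x \<noteq> y"
  have "a x j \<le> b y j \<and> a y j \<le> b x j" if j: "j < k" for j
  proof -
    obtain w where w: "leader j T w" "key j x \<le> key j w" "a w j \<le> b x j"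
      using xy(1) j unfolding zone_def by blast
    obtain w' where w': "leader j T w'" "key j y \<le> key j w'" "a w' j \<le> b y j"
      using xy(2) j unfolding zone_def by blast
    have "w' = w" using leader_unique[OF assms w'(1) w(1)] .
    moreover have "a x j \<le> a w j" "a y j \<le> a w' j"
      using w(2) w'(2) unfolding key_def by (auto simp: less_eq_prod_def)
    ultimately show ?thesis using w w' by auto
  qed
  then show "{x, y} \<notin> E"
    using xy nonadjacent_iff_boxes_overlap unfolding zone_def by auto
qed

lemma independent_subset_zone_leaders:
  assumes "independent V E \<sigma>"
  shows "\<sigma> \<subseteq> zone (leaders \<sigma>)"
proof
  fix v assume v: "v \<in> \<sigma>"
  have \<sigma>V: "\<sigma> \<subseteq> V" using assms unfolding independent_def by auto
  have "\<exists>w. leader j (leaders \<sigma>) w \<and> key j v \<le> key j w \<and> a w j \<le> b v j" if j: "j < k" for j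
  proof -
    obtain w where w: "leader j \<sigma> w" using leader_exists[OF \<sigma>V] v by blast
    then have "leader j (leaders \<sigma>) w"
      using j leaders_subset unfolding leaders_def leader_def by blast
    moreover have "a w j \<le> b v j"
    proof (cases "v = w")
      case True then show ?thesis using lower_le_upper j v \<sigma>V by auto
    next
      case False
      then have "{w, v} \<notin> E" using assms w v unfolding independent_def leader_def by auto
      then show ?thesis using nonadjacent_iff_boxes_overlap False w v \<sigma>V j
        unfolding leader_def by auto
    qed
    ultimately show ?thesis using w v unfolding leader_def by auto
  qed
  then show "v \<in> zone (leaders \<sigma>)" using v \<sigma>V unfolding zone_def by auto
qed

lemma leaders_eq_if_between:
  assumes "\<sigma>' \<subseteq> V" "leaders \<sigma>' \<subseteq> \<sigma>" "\<sigma> \<subseteq> zone (leaders \<sigma>')"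
  shows "leaders \<sigma> = leaders \<sigma>'"
proof
  have \<sigma>V: "\<sigma> \<subseteq> V" using assms(3) unfolding zone_def by auto
  show "leaders \<sigma> \<subseteq> leaders \<sigma>'"
  proof
    fix v assume "v \<in> leaders \<sigma>"
    then obtain j where j: "j < k" "leader j \<sigma> v" unfolding leaders_def by auto
    then have "v \<in> zone (leaders \<sigma>')" using assms(3) unfolding leader_def by auto
    then obtain w where w: "leader j (leaders \<sigma>') w" "key j v \<le> key j w"
      using j unfolding zone_def by auto
    have "w \<in> \<sigma>" using w assms(2) unfolding leader_def by auto
    then have "leader j \<sigma> w" using j w unfolding leader_def by (meson order_trans)
    then have "w = v" using leader_unique[OF \<sigma>V] j by blast
    then show "v \<in> leaders \<sigma>'" using w(1) unfolding leader_def by auto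
  qed
next
  show "leaders \<sigma>' \<subseteq> leaders \<sigma>"
  proof
    fix v assume v: "v \<in> leaders \<sigma>'"
    then obtain j where j: "j < k" "leader j \<sigma>' v" unfolding leaders_def by auto
    then have lead: "leader j (leaders \<sigma>') v" using v unfolding leader_def
      using leaders_subset by blast
    have "key j u \<le> key j v" if u: "u \<in> \<sigma>" for u
    proof -
      obtain w where w: "leader j (leaders \<sigma>') w" "key j u \<le> key j w"
        using u assms(3) j unfolding zone_def by blast
      then show ?thesis using leader_unique[OF _ w(1) lead] leaders_subset assms(1) by blast
    qed
    then show "v \<in> leaders \<sigma>" using v j assms(2) unfolding leaders_def leader_def by auto
  qed
qed

theorem sreg_le_dimension:
  assumes "V \<subseteq> X" "simple_graph V E"
  shows "sreg X E \<le> k"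
proof (rule sreg_le_if_interval_partition[OF assms])
  let ?P = "(\<lambda>\<sigma>. (leaders \<sigma>, zone (leaders \<sigma>))) ` Collect (independent V E)"
  have "Collect (independent V E) \<subseteq> Pow V" unfolding independent_def by auto
  then show "finite ?P" using finite_V by (meson finite_Pow_iff finite_imageI finite_subset)
  have indep_V: "independent V E \<sigma> \<Longrightarrow> \<sigma> \<subseteq> V" for \<sigma> unfolding independent_def by auto
  show "U \<subseteq> Z \<and> independent V E Z \<and> card U \<le> k" if UZ: "(U, Z) \<in> ?P" for U Z
  proof -
    obtain \<sigma> where \<sigma>: "independent V E \<sigma>" "U = leaders \<sigma>" "Z = zone (leaders \<sigma>)"
      using UZ by auto
    have "U \<subseteq> \<sigma>" "\<sigma> \<subseteq> Z" "\<sigma> \<subseteq> V"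
      using \<sigma> leaders_subset independent_subset_zone_leaders indep_V by auto
    then show ?thesis using \<sigma> independent_zone card_leaders_le by auto
  qed
  show "\<exists>!UZ\<in>?P. fst UZ \<subseteq> \<sigma> \<and> \<sigma> \<subseteq> snd UZ" if \<sigma>: "independent V E \<sigma>" for \<sigma>
  proof (rule ex1I)
    show "(leaders \<sigma>, zone (leaders \<sigma>)) \<in> ?P \<and> fst (leaders \<sigma>, zone (leaders \<sigma>)) \<subseteq> \<sigma> \<and>
        \<sigma> \<subseteq> snd (leaders \<sigma>, zone (leaders \<sigma>))"
      using \<sigma> leaders_subset independent_subset_zone_leaders by auto
  next
    fix UZ assume "UZ \<in> ?P \<and> fst UZ \<subseteq> \<sigma> \<and> \<sigma> \<subseteq> snd UZ"
    then obtain \<sigma>' where "independent V E \<sigma>'" "UZ = (leaders \<sigma>', zone (leaders \<sigma>'))"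
      "leaders \<sigma>' \<subseteq> \<sigma>" "\<sigma> \<subseteq> zone (leaders \<sigma>')" by auto
    then show "UZ = (leaders \<sigma>, zone (leaders \<sigma>))"
      using leaders_eq_if_between indep_V by metis
  qed
qed

end

theorem corollary5p11:
  fixes X V :: "'a set" and E :: "'a set set"
  assumes "finite X" and "V \<subseteq> X" and "simple_graph V E"
  shows "sreg X E \<le> boxicity V (compl_edges V E)"
proof -
  have "finite V" using assms(1,2) finite_subset by blast
  obtain r :: "'a \<Rightarrow> nat" where "inj_on r V"
    using finite_imp_inj_to_nat_seg[OF \<open>finite V\<close>] by blast
  obtain a b where "box_representation V (compl_edges V E) (boxicity V (compl_edges V E)) a b"
    using box_representation_boxicity[OF \<open>finite V\<close>] by blast
  then interpret box_representation_of_complement V E "boxicity V (compl_edges V E)" a b r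
    using \<open>finite V\<close> \<open>inj_on r V\<close> by unfold_locales
  show ?thesis using sreg_le_dimension assms(2,3) .
qed

end
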